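(* Let $\eta=\frac1{20}$ and let $a,b>0$ with $a\in[30,\tfrac43b]$. Then $$\big(1-\eta-\eta\,\mathbb E_{x\sim\mathcal N(b,1)}[\tanh'(ax)]\big)a+\eta\,\mathbb E_{x\sim\mathcal N(b,1)}\Big[-\tfrac12\tanh''(ax)a^2(x-b)+\tanh'(ax)(x^2-bx)+\tanh(ax)(x-b)\Big]>0.$$ *)

theory Defs
  imports "HOL-Probability.Probability"
begin

definition eta :: real where "eta = 1/20"

definition tanh' :: "real \<Rightarrow> real" where "tanh' = deriv (tanh :: real \<Rightarrow> real)"

definition tanh'' :: "real \<Rightarrow> real" where "tanh'' = deriv tanh'"

definition gauss :: "real \<Rightarrow> real measure" where
  "gauss mu = density lborel (normal_density mu 1)"

end

theory Submission
  imports Defs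
begin

text \<open>Since \<open>0 \<le> tanh' \<le> 1\<close>, the first summand is at least \<open>(1 - 2 eta) a = 9a/10\<close>.
  For the expectation, \<open>tanh'' = -2 tanh tanh'\<close> and the decay \<open>tanh' y \<le> 1 / (1 + y\<^sup>2)\<close>
  bound the integrand in absolute value by \<open>(3a + 2) (1 + (x - b)\<^sup>2)\<close>, whose Gaussian
  expectation is \<open>2 (3a + 2)\<close>. Hence the left-hand side exceeds
  \<open>9a/10 - (3a + 2)/10 = (6a - 2)/10 > 0\<close>.\<close>

lemma tanh'_eq: "tanh' = (\<lambda>y. 1 - tanh y ^ 2)"
proof
  fix y :: real
  have "(tanh has_field_derivative (1 - tanh y ^ 2)) (at y)"
    by (auto intro!: derivative_eq_intros)
  then show "tanh' y = 1 - tanh y ^ 2"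
    unfolding tanh'_def by (rule DERIV_imp_deriv)
qed

lemma tanh''_eq: "tanh'' y = - 2 * tanh y * tanh' y"
proof -
  have "((\<lambda>y. 1 - tanh y ^ 2) has_field_derivative (- 2 * tanh y * (1 - tanh y ^ 2))) (at y)"
    by (auto intro!: derivative_eq_intros simp: algebra_simps power2_eq_square)
  then show ?thesis
    unfolding tanh''_def tanh'_eq by (rule DERIV_imp_deriv)
qed

lemma tanh'_eq_inverse_cosh_sq: "tanh' y = 1 / cosh y ^ 2"
proof -
  have "cosh y \<noteq> 0" by simp
  then have "tanh' y = (cosh y ^ 2 - sinh y ^ 2) / cosh y ^ 2"
    by (simp add: tanh'_eq tanh_def field_simps)
  then show ?thesis by (simp add: hyperbolic_pythagoras)
qed

lemma tanh'_nonneg: "0 \<le> tanh' y"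
  by (simp add: tanh'_eq_inverse_cosh_sq)

lemma tanh'_le_one: "tanh' y \<le> 1"
  by (simp add: tanh'_eq)

lemma tanh'_mult_one_plus_sq_le: "tanh' y * (1 + y\<^sup>2) \<le> 1"
proof -
  have "\<bar>y\<bar> \<le> \<bar>sinh y\<bar>"
    using real_le_abs_sinh[of y] by (simp add: sinh_def exp_minus)
  then have "y\<^sup>2 \<le> sinh y ^ 2"
    by (metis abs_ge_zero power2_abs power_mono)
  then have "1 + y\<^sup>2 \<le> cosh y ^ 2"
    by (simp add: cosh_square_eq)
  then show ?thesis
    by (simp add: tanh'_eq_inverse_cosh_sq field_simps)
qed

lemma abs_le_one_plus_sq: "\<bar>u :: real\<bar> \<le> 1 + u\<^sup>2"
proof -
  have "0 \<le> (\<bar>u\<bar> - 1/2)\<^sup>2" by simp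
  then show ?thesis by (simp add: power2_eq_square algebra_simps)
qed

lemma tanh'_mult_abs_le: "tanh' y * \<bar>y\<bar> \<le> 1"
  using mult_left_mono[OF abs_le_one_plus_sq tanh'_nonneg] tanh'_mult_one_plus_sq_le
  by (rule order_trans)

lemma tanh'_dilate_mult_abs_le:
  assumes "1 \<le> a"
  shows "tanh' (a * x) * \<bar>x\<bar> \<le> 1"
proof -
  have "\<bar>x\<bar> \<le> \<bar>a * x\<bar>"
    using assms by (simp add: abs_mult mult_le_cancel_right1)
  then have "tanh' (a * x) * \<bar>x\<bar> \<le> tanh' (a * x) * \<bar>a * x\<bar>"
    by (simp add: mult_left_mono tanh'_nonneg)
  then show ?thesis
    using tanh'_mult_abs_le[of "a * x"] by linarith
qed

text \<open>Near the origin \<open>x\<close> is far from \<open>b\<close>, so the factor \<open>a\<close> is absorbed by \<open>\<bar>x - b\<bar>\<close>;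
  away from the origin it is absorbed by the decay of \<open>tanh'\<close>.\<close>

lemma mult_tanh'_dilate_dist_le:
  assumes "0 \<le> a" and "a \<le> 3 * (b - 1)"
  shows "a * tanh' (a * x) * \<bar>x - b\<bar> \<le> 3 * (1 + (x - b)\<^sup>2)"
proof (cases "1 \<le> \<bar>x\<bar>")
  case True
  then have a_le: "a \<le> \<bar>a * x\<bar>"
    using assms(1) by (simp add: abs_mult mult_le_cancel_left1)
  have "a * tanh' (a * x) \<le> tanh' (a * x) * \<bar>a * x\<bar>"
    using mult_right_mono[OF a_le tanh'_nonneg[of "a * x"]] by (simp add: mult.commute)
  then have "a * tanh' (a * x) \<le> 1"
    using tanh'_mult_abs_le[of "a * x"] by linarith
  then have "a * tanh' (a * x) * \<bar>x - b\<bar> \<le> \<bar>x - b\<bar>"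
    using assms(1) tanh'_nonneg[of "a * x"] by (intro mult_left_le_one_le) auto
  also have "\<dots> \<le> 3 * (1 + (x - b)\<^sup>2)"
    using abs_le_one_plus_sq[of "x - b"] by simp
  finally show ?thesis .
next
  case False
  then have "a \<le> 3 * \<bar>x - b\<bar>"
    using assms by (simp add: abs_if split: if_splits)
  have "a * tanh' (a * x) \<le> a"
    using assms(1) tanh'_nonneg tanh'_le_one by (rule mult_right_le_one_le)
  then have "a * tanh' (a * x) * \<bar>x - b\<bar> \<le> a * \<bar>x - b\<bar>"
    by (rule mult_right_mono) simp
  also have "\<dots> \<le> 3 * \<bar>x - b\<bar> * \<bar>x - b\<bar>"
    using \<open>a \<le> 3 * \<bar>x - b\<bar>\<close> by (simp add: mult_right_mono)
  also have "\<dots> \<le> 3 * (1 + (x - b)\<^sup>2)"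
    by (simp add: power2_eq_square)
  finally show ?thesis .
qed

lemma abs_tanh_integrand_le:
  assumes "1 \<le> a" and "a \<le> 3 * (b - 1)"
  shows "\<bar>- (1/2) * tanh'' (a * x) * a^2 * (x - b) + tanh' (a * x) * (x^2 - b * x)
           + tanh (a * x) * (x - b)\<bar> \<le> (3 * a + 2) * (1 + (x - b)\<^sup>2)"
proof -
  let ?t = "tanh (a * x)" and ?F = "1 + (x - b)\<^sup>2"
  have t: "\<bar>?t\<bar> \<le> 1"
    using tanh_real_bounds[of "a * x"] by auto
  have F: "\<bar>x - b\<bar> \<le> ?F"
    by (rule abs_le_one_plus_sq)
  have "\<bar>a * ?t * (a * tanh' (a * x) * (x - b))\<bar> \<le> a * (3 * ?F)"
  proof -
    have "\<bar>a * ?t * (a * tanh' (a * x) * (x - b))\<bar>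
        = a * \<bar>?t\<bar> * (a * tanh' (a * x) * \<bar>x - b\<bar>)"
      using assms(1) tanh'_nonneg by (simp add: abs_mult)
    also have "\<dots> \<le> a * (a * tanh' (a * x) * \<bar>x - b\<bar>)"
      using assms(1) t tanh'_nonneg by (intro mult_right_mono) (auto simp: mult_left_le_one_le)
    also have "\<dots> \<le> a * (3 * ?F)"
      using assms mult_tanh'_dilate_dist_le[of a b x] by simp
    finally show ?thesis .
  qed
  moreover have "\<bar>tanh' (a * x) * x * (x - b)\<bar> \<le> ?F"
  proof -
    have "\<bar>tanh' (a * x) * x * (x - b)\<bar> = tanh' (a * x) * \<bar>x\<bar> * \<bar>x - b\<bar>"
      using tanh'_nonneg by (simp add: abs_mult)
    also have "\<dots> \<le> \<bar>x - b\<bar>"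
      using tanh'_dilate_mult_abs_le[OF assms(1)] tanh'_nonneg
      by (simp add: mult_left_le_one_le)
    finally show ?thesis using F by linarith
  qed
  moreover have "\<bar>?t * (x - b)\<bar> \<le> ?F"
  proof -
    have "\<bar>?t\<bar> * \<bar>x - b\<bar> \<le> \<bar>x - b\<bar>"
      using t by (intro mult_left_le_one_le) auto
    then show ?thesis using F by (simp add: abs_mult)
  qed
  moreover have "- (1/2) * tanh'' (a * x) * a^2 * (x - b) + tanh' (a * x) * (x^2 - b * x)
      + ?t * (x - b)
      = a * ?t * (a * tanh' (a * x) * (x - b)) + tanh' (a * x) * x * (x - b) + ?t * (x - b)"
    by (simp add: tanh''_eq power2_eq_square algebra_simps)
  ultimately show ?thesis
    by (simp add: algebra_simps)
qed

lemma prob_space_gauss: "prob_space (gauss b)"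
  unfolding gauss_def by (rule prob_space_normal_density) simp

lemma integrable_gauss_one_plus_sq: "integrable (gauss b) (\<lambda>x. 1 + (x - b)\<^sup>2)"
  and integral_gauss_one_plus_sq: "(\<integral>x. 1 + (x - b)\<^sup>2 \<partial>gauss b) = 2"
proof -
  have i0: "integrable lborel (normal_density b 1)"
    by simp
  have i2: "integrable lborel (\<lambda>x. normal_density b 1 x * (x - b)\<^sup>2)"
    using integrable_normal_moment[where \<mu>=b and \<sigma>=1 and k=2] by simp
  have "integrable lborel (\<lambda>x. normal_density b 1 x * (1 + (x - b)\<^sup>2))"
    using Bochner_Integration.integrable_add[OF i0 i2] by (simp add: algebra_simps)
  then show "integrable (gauss b) (\<lambda>x. 1 + (x - b)\<^sup>2)"
    unfolding gauss_def by (subst integrable_density) auto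
  have m2: "(\<integral>x. normal_density b 1 x * (x - b)\<^sup>2 \<partial>lborel) = 1"
    using integral_normal_moment_even[where \<mu>=b and \<sigma>=1 and k=1] by simp
  have "(\<integral>x. 1 + (x - b)\<^sup>2 \<partial>gauss b)
      = (\<integral>x. normal_density b 1 x + normal_density b 1 x * (x - b)\<^sup>2 \<partial>lborel)"
    unfolding gauss_def by (subst integral_density) (auto simp: algebra_simps)
  also have "\<dots> = 2"
    using Bochner_Integration.integral_add[OF i0 i2] m2 by simp
  finally show "(\<integral>x. 1 + (x - b)\<^sup>2 \<partial>gauss b) = 2" .
qed

text \<open>No integrability of \<open>f\<close> is needed: a non-integrable \<open>f\<close> has integral \<open>0\<close>.\<close>

lemma abs_integral_gauss_le:
  assumes "\<And>x. \<bar>f x\<bar> \<le> C * (1 + (x - b)\<^sup>2)"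
  shows "\<bar>\<integral>x. f x \<partial>gauss b\<bar> \<le> 2 * C"
proof -
  have F_nonneg: "0 \<le> C * (1 + (x - b)\<^sup>2)" for x
    using abs_ge_zero assms by (rule order_trans)
  have bound: "(\<integral>x. g x \<partial>gauss b) \<le> 2 * C" if "\<And>x. g x \<le> \<bar>f x\<bar>" for g
  proof -
    have "(\<integral>x. g x \<partial>gauss b) \<le> (\<integral>x. C * (1 + (x - b)\<^sup>2) \<partial>gauss b)"
      using that assms F_nonneg integrable_gauss_one_plus_sq
      by (intro integral_mono') (auto intro: order_trans)
    also have "\<dots> = 2 * C"
      by (simp add: integral_gauss_one_plus_sq)
    finally show ?thesis .
  qed
  have "(\<integral>x. f x \<partial>gauss b) \<le> 2 * C" "(\<integral>x. - f x \<partial>gauss b) \<le> 2 * C"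
    by (rule bound; simp)+
  then show ?thesis
    by (simp add: abs_le_iff)
qed

theorem lemmaF3:
  fixes a b :: real
  assumes "a > 0" and "b > 0" and "30 \<le> a" and "a \<le> 4/3 * b"
  shows "(1 - eta - eta * (\<integral>x. tanh' (a * x) \<partial>gauss b)) * a
         + eta * (\<integral>x. (- (1/2) * tanh'' (a * x) * a^2 * (x - b)
                          + tanh' (a * x) * (x^2 - b * x)
                          + tanh (a * x) * (x - b)) \<partial>gauss b) > 0"
proof -
  let ?I = "\<integral>x. (- (1/2) * tanh'' (a * x) * a^2 * (x - b)
                          + tanh' (a * x) * (x^2 - b * x)
                          + tanh (a * x) * (x - b)) \<partial>gauss b"
  let ?E = "\<integral>x. tanh' (a * x) \<partial>gauss b"
  interpret prob_space "gauss b"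
    by (rule prob_space_gauss)
  have "?E \<le> (\<integral>x. 1 \<partial>gauss b)"
    by (rule integral_mono') (auto simp: tanh'_le_one)
  then have "?E \<le> 1"
    by (simp add: prob_space)
  moreover have "\<bar>?I\<bar> \<le> 2 * (3 * a + 2)"
    using assms by (intro abs_integral_gauss_le abs_tanh_integrand_le) auto
  ultimately have "9/10 * a \<le> (1 - eta - eta * ?E) * a" and "- (3 * a + 2) / 10 \<le> eta * ?I"
    using assms(1) by (auto simp: eta_def abs_le_iff intro!: mult_right_mono)
  then have "9/10 * a + - (3 * a + 2) / 10 \<le> (1 - eta - eta * ?E) * a + eta * ?I"
    by (rule add_mono)
  moreover have "0 < 9/10 * a + - (3 * a + 2) / 10"
    using assms(3) by (simp add: field_simps)
  ultimately show ?thesis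
    by simp
qed

end
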